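(* Let $\xi$ be a DoS sequence that is not an edge case, let $\mathscr{L}$ be a symmetric irreducible graph Laplacian with largest eigenvalue $\lambda_N(\mathscr{L})$, and let $t_1=0$, $t_{k+1}=t_k+\Delta_k$, where $\Delta_k=\Delta_0$ if $t_k\in[0,h_1+\tau_1)$, with $\Delta_0>0$ satisfying $\lvert1-\Delta_0\lambda_N(\mathscr{L})\rvert<1$, and $\Delta_k=\min\{\Delta_0,\ (1-\hat B_d(h_n+\tau_n))/(\gamma_1\hat B_f(h_n))\}$ if $t_k\in[h_n+\tau_n,h_{n+1}+\tau_{n+1})$, $n\in\mathbb{N}_+$, with $\gamma_1>1$ and $\hat B_d,\hat B_f$ generated by the DoS estimator. Then there exist a finite $\check t\geqslant 0$, constants $\underline{\Delta}$ and $\bar\Delta$, a duration-bound $B_d$ and a frequency-bound $B_f$ of $\xi$ such that $0<\underline{\Delta}\leqslant\Delta_k<+\infty$ for all $t_k\geqslant 0$, $\Delta_k\leqslant\bar\Delta$ for all $t_k\geqslant\check t$, $\lvert1-\bar\Delta\lambda_N(\mathscr{L})\rvert<1$, and $B_d+B_f\bar\Delta<1$.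
   Context: A DoS sequence $\xi=\{H_n\}$ is a finite or infinite sequence of sets $H_n := \{h_n\}\cup[h_n,h_n+\tau_n)$, where $h_1\geqslant 0$, $\tau_n\geqslant 0$ and $h_{n+1} > h_n+\tau_n$ for all $n$. If $\xi$ has only $m$ elements, the convention $h_{n}=h_{n}+\tau_{n}=+\infty$ for $n>m$ is used. For $0\leqslant \tau\leqslant s$ let $\Xi(\tau,s) := \bigcup_n H_n\cap[\tau,s]$ and $n_\xi(\tau,s) := \operatorname{card}(\{h_n\}_n\cap[\tau,s])$; $\lvert\cdot\rvert$ is Lebesgue measure. A constant $B_d\in[0,1]$ is a duration-bound of $\xi$ if there is $0<\kappa<+\infty$ with $\lvert \Xi(0,t)\rvert\leqslant \kappa + B_d t$ for all $t\geqslant 0$. A constant $B_f\in[0,+\infty)$ is a frequency-bound of $\xi$ if there is an integer $0<\Lambda<+\infty$ with $n_\xi(0,t)\leqslant \Lambda + B_f t$ for all $t\geqslant 0$; if no such finite $B_f$ exists, the frequency-bound is $+\infty$. $\mathcal{D}(\xi)$, $\mathcal{F}(\xi)$ are the sets of duration- and frequency-bounds. $\xi$ is an edge case if (i) $\inf\mathcal{D}(\xi)=1$, or (ii) $\inf\mathcal{F}(\xi)=+\infty$, or (iii) for every $\Gamma>0$ there is $n$ with $\tau_n>\Gamma$. DoS estimator (parameters $2\leqslant\ell\in\mathbb{N}_+$, $0<\epsilon_0<1$, $0<\theta<1$): with $B_d(i) := \frac{\lvert \Xi(0,h_i+\tau_i)\rvert}{h_i+\tau_i}$ and $B_f(i)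 := \frac{i}{h_i}$, $\hat B_d(t) = \epsilon_0$ for $t\in[0,h_\ell+\tau_\ell)$, $\hat B_d(t) = \max_{\ell\leqslant i\leqslant n}\{\epsilon_0,\ \theta B_d(i)+(1-\theta)\}$ for $t\in[h_n+\tau_n, h_{n+1}+\tau_{n+1})$, $n\geqslant \ell$; $\hat B_f(t) = \epsilon_0$ for $t\in[0,h_\ell)$, $\hat B_f(t) = \max_{\ell\leqslant i\leqslant n}\{\epsilon_0,\ B_f(i)/\theta\}$ for $t\in[h_n,h_{n+1})$, $n\geqslant\ell$. *)

theory Defs
  imports "HOL-Analysis.Analysis" "HOL-Library.Extended_Nat"
begin

text \<open>A DoS sequence is given by its number of elements M (possibly infinite, M = \<infinity>)
  and real sequences h, tau indexed from 1; only indices n with 1 \<le> n \<le> M are elements.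
  Indices beyond M correspond to the convention h_n = h_n + tau_n = +\<infinity>.\<close>

definition dos_valid :: "enat \<Rightarrow> nat \<Rightarrow> bool" where
  "dos_valid M n \<longleftrightarrow> 1 \<le> n \<and> enat n \<le> M"

definition dos_sequence :: "enat \<Rightarrow> (nat \<Rightarrow> real) \<Rightarrow> (nat \<Rightarrow> real) \<Rightarrow> bool" where
  "dos_sequence M h \<tau> \<longleftrightarrow>
     (dos_valid M 1 \<longrightarrow> 0 \<le> h 1) \<and>
     (\<forall>n. dos_valid M n \<longrightarrow> 0 \<le> \<tau> n) \<and>
     (\<forall>n. dos_valid M n \<and> dos_valid M (n + 1) \<longrightarrow> h n + \<tau> n < h (n + 1))"

definition dos_H :: "(nat \<Rightarrow> real) \<Rightarrow> (nat \<Rightarrow> real) \<Rightarrow> nat \<Rightarrow> real set" where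
  "dos_H h \<tau> n = {h n} \<union> {h n ..< h n + \<tau> n}"

definition dos_Xi :: "enat \<Rightarrow> (nat \<Rightarrow> real) \<Rightarrow> (nat \<Rightarrow> real) \<Rightarrow> real \<Rightarrow> real \<Rightarrow> real set" where
  "dos_Xi M h \<tau> a b = (\<Union>n\<in>{n. dos_valid M n}. dos_H h \<tau> n) \<inter> {a..b}"

definition dos_count_set :: "enat \<Rightarrow> (nat \<Rightarrow> real) \<Rightarrow> real \<Rightarrow> real \<Rightarrow> real set" where
  "dos_count_set M h a b = {h n | n. dos_valid M n} \<inter> {a..b}"

definition duration_bound :: "enat \<Rightarrow> (nat \<Rightarrow> real) \<Rightarrow> (nat \<Rightarrow> real) \<Rightarrow> real \<Rightarrow> bool" where
  "duration_bound M h \<tau> B \<longleftrightarrow> 0 \<le> B \<and> B \<le> 1 \<and>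
     (\<exists>\<kappa>>0. \<forall>t\<ge>0. measure lebesgue (dos_Xi M h \<tau> 0 t) \<le> \<kappa> + B * t)"

text \<open>A finite frequency bound; the cardinality inequality is required with the
  counted set finite (an infinite count never satisfies a finite bound).\<close>
definition frequency_bound :: "enat \<Rightarrow> (nat \<Rightarrow> real) \<Rightarrow> real \<Rightarrow> bool" where
  "frequency_bound M h B \<longleftrightarrow> 0 \<le> B \<and>
     (\<exists>\<Lambda>::nat. 0 < \<Lambda> \<and> (\<forall>t\<ge>0. finite (dos_count_set M h 0 t) \<and>
        real (card (dos_count_set M h 0 t)) \<le> real \<Lambda> + B * t))"

text \<open>Edge case: (i) inf D = 1, (ii) inf F = +\<infinity> (i.e. no finite frequency bound),
  (iii) durations unbounded.\<close>
definition dos_edge_case :: "enat \<Rightarrow> (nat \<Rightarrow> real) \<Rightarrow> (nat \<Rightarrow> real) \<Rightarrow> bool" where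
  "dos_edge_case M h \<tau> \<longleftrightarrow>
     Inf {B. duration_bound M h \<tau> B} = 1 \<or>
     \<not> (\<exists>B. frequency_bound M h B) \<or>
     (\<forall>\<Gamma>>0. \<exists>n. dos_valid M n \<and> \<tau> n > \<Gamma>)"

definition dos_period :: "enat \<Rightarrow> (nat \<Rightarrow> real) \<Rightarrow> (nat \<Rightarrow> real) \<Rightarrow> nat \<Rightarrow> real \<Rightarrow> bool" where
  "dos_period M h \<tau> n t \<longleftrightarrow> dos_valid M n \<and> h n + \<tau> n \<le> t \<and>
     (dos_valid M (n + 1) \<longrightarrow> t < h (n + 1) + \<tau> (n + 1))"

definition dos_hperiod :: "enat \<Rightarrow> (nat \<Rightarrow> real) \<Rightarrow> nat \<Rightarrow> real \<Rightarrow> bool" where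
  "dos_hperiod M h n t \<longleftrightarrow> dos_valid M n \<and> h n \<le> t \<and>
     (dos_valid M (n + 1) \<longrightarrow> t < h (n + 1))"

definition dos_before_end :: "enat \<Rightarrow> (nat \<Rightarrow> real) \<Rightarrow> (nat \<Rightarrow> real) \<Rightarrow> nat \<Rightarrow> real \<Rightarrow> bool" where
  "dos_before_end M h \<tau> n t \<longleftrightarrow> 0 \<le> t \<and> (dos_valid M n \<longrightarrow> t < h n + \<tau> n)"

definition dos_before_start :: "enat \<Rightarrow> (nat \<Rightarrow> real) \<Rightarrow> nat \<Rightarrow> real \<Rightarrow> bool" where
  "dos_before_start M h n t \<longleftrightarrow> 0 \<le> t \<and> (dos_valid M n \<longrightarrow> t < h n)"

definition est_Bd_i :: "enat \<Rightarrow> (nat \<Rightarrow> real) \<Rightarrow> (nat \<Rightarrow> real) \<Rightarrow> nat \<Rightarrow> real" where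
  "est_Bd_i M h \<tau> i = measure lebesgue (dos_Xi M h \<tau> 0 (h i + \<tau> i)) / (h i + \<tau> i)"

definition est_Bf_i :: "(nat \<Rightarrow> real) \<Rightarrow> nat \<Rightarrow> real" where
  "est_Bf_i h i = real i / h i"

definition est_Bd :: "nat \<Rightarrow> real \<Rightarrow> real \<Rightarrow> enat \<Rightarrow> (nat \<Rightarrow> real) \<Rightarrow> (nat \<Rightarrow> real) \<Rightarrow> real \<Rightarrow> real" where
  "est_Bd ell \<epsilon>0 \<theta> M h \<tau> t =
     (if dos_before_end M h \<tau> ell t then \<epsilon>0
      else (let n = (THE n. ell \<le> n \<and> dos_period M h \<tau> n t) in
        max \<epsilon>0 (Max ((\<lambda>i. \<theta> * est_Bd_i M h \<tau> i + (1 - \<theta>)) ` {ell..n}))))"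

definition est_Bf :: "nat \<Rightarrow> real \<Rightarrow> real \<Rightarrow> enat \<Rightarrow> (nat \<Rightarrow> real) \<Rightarrow> real \<Rightarrow> real" where
  "est_Bf ell \<epsilon>0 \<theta> M h t =
     (if dos_before_start M h ell t then \<epsilon>0
      else (let n = (THE n. ell \<le> n \<and> dos_hperiod M h n t) in
        max \<epsilon>0 (Max ((\<lambda>i. est_Bf_i h i / \<theta>) ` {ell..n}))))"

definition graph_laplacian :: "real^'n^'n \<Rightarrow> bool" where
  "graph_laplacian L \<longleftrightarrow> (\<forall>i j. i \<noteq> j \<longrightarrow> L $ i $ j \<le> 0) \<and> (\<forall>i. (\<Sum>j\<in>UNIV. L $ i $ j) = 0)"

definition symmetric_matrix :: "real^'n^'n \<Rightarrow> bool" where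
  "symmetric_matrix L \<longleftrightarrow> transpose L = L"

text \<open>Irreducible: no nonempty proper index set is closed (no permutation to block triangular form).\<close>
definition irreducible_matrix :: "real^'n^'n \<Rightarrow> bool" where
  "irreducible_matrix L \<longleftrightarrow>
     (\<forall>S. S \<noteq> {} \<and> S \<noteq> UNIV \<longrightarrow> (\<exists>i\<in>S. \<exists>j. j \<notin> S \<and> L $ i $ j \<noteq> 0))"

definition lambda_max :: "real^'n^'n \<Rightarrow> real" where
  "lambda_max L = Max {\<mu>. \<exists>v. v \<noteq> 0 \<and> L *v v = \<mu> *\<^sub>R v}"

end

theory Submission
  imports Defs
begin

(*
  Away from the edge cases the sequence has a duration bound B < 1, a finite frequency bound
  and bounded durations.  Since the first off-period h 2 - (h 1 + tau 1) has positive length,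
  all ratios B_d(i), i >= 2, stay below one constant U < 1, and counting arrivals keeps all
  ratios B_f(i) bounded.  Hence the estimates satisfy hat B_d <= const < 1 and
  eps0 <= hat B_f <= const, so all steps are bounded from below.

  Conversely, S_d = sup B_d(i) and S_f = sup B_f(i) over i >= ell are themselves a duration and a
  frequency bound.  Once the estimator has passed indices i, j with B_d(i) > S_d - eta and
  B_f(j) > S_f - eta, every later step is at most theta^2/gamma1 * (1 - S_d + eta) / (S_f - eta).
  As theta^2/gamma1 < 1, eta can be chosen so small that S_d + S_f times this bound is below 1.
*)

lemma dos_valid_ge_1: "dos_valid M n \<Longrightarrow> 1 \<le> n"
  unfolding dos_valid_def by simp

lemma dos_valid_le: "dos_valid M n \<Longrightarrow> 1 \<le> k \<Longrightarrow> k \<le> n \<Longrightarrow> dos_valid M k"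
  unfolding dos_valid_def by (meson enat_ord_simps(1) order_trans)

lemma dos_Xi_subset: "dos_Xi M h \<tau> a b \<subseteq> {a..b}"
  unfolding dos_Xi_def by auto

lemma dos_Xi_lmeasurable: "dos_Xi M h \<tau> a b \<in> lmeasurable"
proof (rule bounded_set_imp_lmeasurable)
  show "bounded (dos_Xi M h \<tau> a b)"
    by (meson bounded_closed_interval bounded_subset dos_Xi_subset)
  show "dos_Xi M h \<tau> a b \<in> sets lebesgue"
    unfolding dos_Xi_def dos_H_def by (intro sets.Int sets.countable_UN' sets.Un) auto
qed

lemma measure_dos_Xi_le:
  assumes "0 \<le> b" shows "measure lebesgue (dos_Xi M h \<tau> 0 b) \<le> b"
proof -
  have "measure lebesgue (dos_Xi M h \<tau> 0 b) \<le> measure lebesgue {0..b}"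
    by (rule measure_mono_fmeasurable[OF dos_Xi_subset]) (auto simp: dos_Xi_lmeasurable fmeasurableD)
  then show ?thesis using assms by simp
qed

lemma measure_dos_Xi_mono:
  "dos_Xi M h \<tau> 0 b \<subseteq> dos_Xi M h \<tau> 0 b' \<Longrightarrow>
   measure lebesgue (dos_Xi M h \<tau> 0 b) \<le> measure lebesgue (dos_Xi M h \<tau> 0 b')"
  using measure_mono_fmeasurable[OF _ _ dos_Xi_lmeasurable] dos_Xi_lmeasurable by blast

lemma eps_le_est_Bf: "\<epsilon>0 \<le> est_Bf ell \<epsilon>0 \<theta> M h t"
  unfolding est_Bf_def Let_def by simp

lemma not_dos_edge_case_bounds:
  assumes "\<not> dos_edge_case M h \<tau>"
  shows "\<exists>B<1. duration_bound M h \<tau> B" "\<exists>B. frequency_bound M h B"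
    "\<exists>\<Gamma>. \<forall>n. dos_valid M n \<longrightarrow> \<tau> n \<le> \<Gamma>"
proof -
  let ?D = "{B. duration_bound M h \<tau> B}"
  have "1 \<in> ?D"
    unfolding duration_bound_def
    by (intro CollectI conjI exI[of _ 1]) (auto intro!: order_trans[OF measure_dos_Xi_le])
  moreover have "bdd_below ?D"
    unfolding duration_bound_def by (rule bdd_belowI[of _ 0]) auto
  ultimately have "Inf ?D < 1"
    using cInf_lower[of 1 ?D] assms unfolding dos_edge_case_def by fastforce
  then show "\<exists>B<1. duration_bound M h \<tau> B"
    using cInf_lessD[of ?D 1] \<open>1 \<in> ?D\<close> by blast
  show "\<exists>B. frequency_bound M h B" "\<exists>\<Gamma>. \<forall>n. dos_valid M n \<longrightarrow> \<tau> n \<le> \<Gamma>"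
    using assms unfolding dos_edge_case_def by (auto simp: not_less)
qed

lemma margin_exists:
  fixes a S c :: real
  assumes "0 < a" "0 < S" "0 \<le> c" "c < 1"
  shows "\<exists>\<eta>>0. \<eta> < S \<and> S * (c * (a + \<eta>) / (S - \<eta>)) < a"
proof -
  have "((\<lambda>\<eta>. S * (c * (a + \<eta>) / (S - \<eta>))) \<longlongrightarrow> S * (c * (a + 0) / (S - 0))) (at_right 0)"
    using assms(2) by (intro tendsto_intros) simp_all
  moreover have "S * (c * (a + 0) / (S - 0)) < a"
    using assms by simp
  ultimately have "\<forall>\<^sub>F \<eta> in at_right 0. S * (c * (a + \<eta>) / (S - \<eta>)) < a"
    by (rule order_tendstoD(2))
  moreover have "\<forall>\<^sub>F \<eta> in at_right 0. \<eta> \<in> {0<..<S}"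
    using eventually_at_right_real[OF assms(2)] .
  ultimately have "\<forall>\<^sub>F \<eta> in at_right 0. S * (c * (a + \<eta>) / (S - \<eta>)) < a \<and> \<eta> \<in> {0<..<S}"
    by (rule eventually_conj)
  then show ?thesis
    using eventually_happens'[OF trivial_limit_at_right_real] by fastforce
qed

lemma step_within_stability_margin:
  fixes d d0 r :: real
  assumes "0 < d" "d \<le> d0" "\<bar>1 - d0 * r\<bar> < 1"
  shows "\<bar>1 - d * r\<bar> < 1"
proof -
  have "0 < d0 * r" "d0 * r < 2" using assms(3) by linarith+
  then have "0 < r" using assms(1,2) by (simp add: zero_less_mult_iff)
  then have "0 < d * r" "d * r \<le> d0 * r" using assms(1,2) by (simp_all add: mult_right_mono)
  then show ?thesis unfolding abs_less_iff using \<open>d0 * r < 2\<close> by linarith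
qed

locale dos_seq =
  fixes M :: enat and h \<tau> :: "nat \<Rightarrow> real"
  assumes dos: "dos_sequence M h \<tau>"
begin

lemma tau_nonneg: "dos_valid M n \<Longrightarrow> 0 \<le> \<tau> n"
  using dos unfolding dos_sequence_def by blast

lemma end_less_start:
  assumes "dos_valid M j" "1 \<le> i" "i < j"
  shows "h i + \<tau> i < h j"
  using assms
proof (induction j)
  case (Suc j)
  have valid: "dos_valid M j" "dos_valid M (j + 1)"
    using Suc.prems dos_valid_le[OF Suc.prems(1)] by auto
  then have next_gap: "h j + \<tau> j < h (j + 1)"
    using dos unfolding dos_sequence_def by blast
  show ?case
  proof (cases "i = j")
    case False
    then have "h i + \<tau> i < h j" using Suc valid by simp
    then show ?thesis using next_gap tau_nonneg[OF valid(1)] by simp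
  qed (use next_gap in simp)
qed simp

lemma start_less_start:
  assumes "dos_valid M j" "1 \<le> i" "i < j"
  shows "h i < h j"
  using end_less_start[OF assms] tau_nonneg[OF dos_valid_le[OF assms(1,2)]] assms(3) by simp

lemma start_mono: "dos_valid M j \<Longrightarrow> 1 \<le> i \<Longrightarrow> i \<le> j \<Longrightarrow> h i \<le> h j"
  using start_less_start by (cases "i = j") (auto intro: less_imp_le)

lemma end_mono: "dos_valid M j \<Longrightarrow> 1 \<le> i \<Longrightarrow> i \<le> j \<Longrightarrow> h i + \<tau> i \<le> h j + \<tau> j"
  using end_less_start[of j i] tau_nonneg[of j] by (cases "i = j") force+

lemma h_nonneg:
  assumes "dos_valid M n" shows "0 \<le> h n"
proof -
  have "dos_valid M 1" using dos_valid_le[OF assms] dos_valid_ge_1[OF assms] by simp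
  then have "0 \<le> h 1" using dos unfolding dos_sequence_def by blast
  then show ?thesis using start_mono[OF assms] dos_valid_ge_1[OF assms] by fastforce
qed

lemma h_pos:
  assumes "dos_valid M n" "2 \<le> n" shows "0 < h n"
proof -
  have "dos_valid M 1" using dos_valid_le[OF assms(1)] assms(2) by simp
  then show ?thesis
    using end_less_start[OF assms(1), of 1] assms(2) h_nonneg tau_nonneg by fastforce
qed

lemma end_nonneg: "dos_valid M n \<Longrightarrow> 0 \<le> h n + \<tau> n"
  using h_nonneg tau_nonneg by (simp add: add_nonneg_nonneg)

lemma period_at_end: "dos_valid M n \<Longrightarrow> dos_period M h \<tau> n (h n + \<tau> n)"
  unfolding dos_period_def using end_less_start[of "n + 1" n] tau_nonneg[of "n + 1"] dos_valid_ge_1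
  by fastforce

lemma hperiod_at_start: "dos_valid M n \<Longrightarrow> dos_hperiod M h n (h n)"
  unfolding dos_hperiod_def using end_less_start[of "n + 1" n] tau_nonneg[of n] dos_valid_ge_1
  by fastforce

lemma period_index_ge:
  assumes "dos_period M h \<tau> n s" "dos_valid M m" "h m + \<tau> m \<le> s"
  shows "m \<le> n"
proof (rule ccontr)
  assume "\<not> m \<le> n"
  then have "dos_valid M (n + 1)" "n + 1 \<le> m"
    using dos_valid_le[OF assms(2)] by auto
  then have "s < h (n + 1) + \<tau> (n + 1)" "h (n + 1) + \<tau> (n + 1) \<le> h m + \<tau> m"
    using assms(1) end_mono[OF assms(2)] unfolding dos_period_def by auto
  then show False using assms(3) by simp
qed

lemma hperiod_index_ge:
  assumes "dos_hperiod M h n s" "dos_valid M m" "h m \<le> s"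
  shows "m \<le> n"
proof (rule ccontr)
  assume "\<not> m \<le> n"
  then have "dos_valid M (n + 1)" "n + 1 \<le> m"
    using dos_valid_le[OF assms(2)] by auto
  then have "s < h (n + 1)" "h (n + 1) \<le> h m"
    using assms(1) start_mono[OF assms(2)] unfolding dos_hperiod_def by auto
  then show False using assms(3) by simp
qed

lemma period_unique: "dos_period M h \<tau> n s \<Longrightarrow> dos_period M h \<tau> n' s \<Longrightarrow> n = n'"
  using period_index_ge unfolding dos_period_def by (meson le_antisym)

lemma hperiod_unique: "dos_hperiod M h n s \<Longrightarrow> dos_hperiod M h n' s \<Longrightarrow> n = n'"
  using hperiod_index_ge unfolding dos_hperiod_def by (meson le_antisym)

lemma est_Bd_at_end:
  assumes "dos_valid M n" "1 \<le> ell"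
  shows "est_Bd ell \<epsilon>0 \<theta> M h \<tau> (h n + \<tau> n) =
    (if ell \<le> n then max \<epsilon>0 (Max ((\<lambda>i. \<theta> * est_Bd_i M h \<tau> i + (1 - \<theta>)) ` {ell..n}))
     else \<epsilon>0)"
proof (cases "ell \<le> n")
  case True
  then have "\<not> dos_before_end M h \<tau> ell (h n + \<tau> n)"
    using dos_valid_le[OF assms(1,2)] end_mono[OF assms] unfolding dos_before_end_def by auto
  moreover have "(THE n'. ell \<le> n' \<and> dos_period M h \<tau> n' (h n + \<tau> n)) = n"
    using True period_at_end[OF assms(1)] period_unique by blast
  ultimately show ?thesis using True unfolding est_Bd_def by simp
next
  case False
  then have "dos_before_end M h \<tau> ell (h n + \<tau> n)"
    using end_nonneg[OF assms(1)] end_less_start[of ell n] tau_nonneg[of ell] dos_valid_ge_1[OF assms(1)]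
    unfolding dos_before_end_def by force
  then show ?thesis using False unfolding est_Bd_def by simp
qed

lemma est_Bf_at_start:
  assumes "dos_valid M n" "1 \<le> ell"
  shows "est_Bf ell \<epsilon>0 \<theta> M h (h n) =
    (if ell \<le> n then max \<epsilon>0 (Max ((\<lambda>i. est_Bf_i h i / \<theta>) ` {ell..n})) else \<epsilon>0)"
proof (cases "ell \<le> n")
  case True
  then have "\<not> dos_before_start M h ell (h n)"
    using dos_valid_le[OF assms(1,2)] start_mono[OF assms] unfolding dos_before_start_def by auto
  moreover have "(THE n'. ell \<le> n' \<and> dos_hperiod M h n' (h n)) = n"
    using True hperiod_at_start[OF assms(1)] hperiod_unique by blast
  ultimately show ?thesis using True unfolding est_Bf_def by simp
next
  case False
  then have "dos_before_start M h ell (h n)"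
    using h_nonneg[OF assms(1)] start_less_start[of ell n] dos_valid_ge_1[OF assms(1)]
    unfolding dos_before_start_def by force
  then show ?thesis using False unfolding est_Bf_def by simp
qed

lemma est_Bd_at_end_ge:
  assumes "dos_valid M n" "1 \<le> ell" "i \<in> {ell..n}"
  shows "\<theta> * est_Bd_i M h \<tau> i + (1 - \<theta>) \<le> est_Bd ell \<epsilon>0 \<theta> M h \<tau> (h n + \<tau> n)"
  unfolding est_Bd_at_end[OF assms(1,2)] using assms(3) by (auto intro!: max.coboundedI2 Max_ge)

lemma est_Bd_at_end_le:
  assumes "dos_valid M n" "1 \<le> ell" "0 \<le> \<theta>" "\<forall>i\<in>{ell..n}. est_Bd_i M h \<tau> i \<le> U"
  shows "est_Bd ell \<epsilon>0 \<theta> M h \<tau> (h n + \<tau> n) \<le> max \<epsilon>0 (\<theta> * U + (1 - \<theta>))"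
proof (cases "ell \<le> n")
  case True
  have "Max ((\<lambda>i. \<theta> * est_Bd_i M h \<tau> i + (1 - \<theta>)) ` {ell..n}) \<le> \<theta> * U + (1 - \<theta>)"
    using True assms(3,4) by (subst Max_le_iff) (auto intro: mult_left_mono)
  then show ?thesis
    unfolding est_Bd_at_end[OF assms(1,2)] if_P[OF True] by (rule max.mono[OF order_refl])
qed (simp add: est_Bd_at_end[OF assms(1,2)])

lemma est_Bf_at_start_ge:
  assumes "dos_valid M n" "1 \<le> ell" "i \<in> {ell..n}"
  shows "est_Bf_i h i / \<theta> \<le> est_Bf ell \<epsilon>0 \<theta> M h (h n)"
  unfolding est_Bf_at_start[OF assms(1,2)] using assms(3) by (auto intro!: max.coboundedI2 Max_ge)

lemma est_Bf_at_start_le: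
  assumes "dos_valid M n" "1 \<le> ell" "0 \<le> \<theta>" "\<forall>i\<in>{ell..n}. est_Bf_i h i \<le> U"
  shows "est_Bf ell \<epsilon>0 \<theta> M h (h n) \<le> max \<epsilon>0 (U / \<theta>)"
proof (cases "ell \<le> n")
  case True
  have "Max ((\<lambda>i. est_Bf_i h i / \<theta>) ` {ell..n}) \<le> U / \<theta>"
    using True assms(3,4) by (subst Max_le_iff) (auto intro: divide_right_mono)
  then show ?thesis
    unfolding est_Bf_at_start[OF assms(1,2)] if_P[OF True] by (rule max.mono[OF order_refl])
qed (simp add: est_Bf_at_start[OF assms(1,2)])

lemma est_Bd_i_nonneg: "dos_valid M n \<Longrightarrow> 0 \<le> est_Bd_i M h \<tau> n"
  unfolding est_Bd_i_def using end_nonneg by simp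

lemma measure_dos_Xi_end:
  assumes "dos_valid M n"
  shows "measure lebesgue (dos_Xi M h \<tau> 0 (h n + \<tau> n)) = est_Bd_i M h \<tau> n * (h n + \<tau> n)"
proof (cases "h n + \<tau> n = 0")
  case True
  then show ?thesis
    using measure_dos_Xi_le[of 0 M h \<tau>] measure_nonneg[of lebesgue] by (simp add: order_antisym)
qed (simp add: est_Bd_i_def)

lemma est_Bd_i_le_one:
  assumes "dos_valid M n" shows "est_Bd_i M h \<tau> n \<le> 1"
  using measure_dos_Xi_le[OF end_nonneg[OF assms]] end_nonneg[OF assms]
  unfolding est_Bd_i_def by (cases "h n + \<tau> n = 0") auto

lemma dos_H_bounds: "dos_valid M n \<Longrightarrow> x \<in> dos_H h \<tau> n \<Longrightarrow> h n \<le> x \<and> x \<le> h n + \<tau> n"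
  using tau_nonneg unfolding dos_H_def by fastforce

lemma dos_Xi_empty: "(\<forall>n. dos_valid M n \<longrightarrow> s < h n) \<Longrightarrow> dos_Xi M h \<tau> 0 s = {}"
  unfolding dos_Xi_def using dos_H_bounds by fastforce

lemma dos_Xi_subset_last_end:
  assumes "dos_valid M j" "\<forall>n. dos_valid M n \<and> h n \<le> s \<longrightarrow> n \<le> j"
  shows "dos_Xi M h \<tau> 0 s \<subseteq> dos_Xi M h \<tau> 0 (h j + \<tau> j)"
proof
  fix x assume "x \<in> dos_Xi M h \<tau> 0 s"
  then obtain n where n: "dos_valid M n" "x \<in> dos_H h \<tau> n" "0 \<le> x" "x \<le> s"
    unfolding dos_Xi_def by auto
  then have "x \<le> h n + \<tau> n" "n \<le> j" using dos_H_bounds assms(2) by force+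
  then have "x \<le> h j + \<tau> j" using end_mono[OF assms(1) dos_valid_ge_1[OF n(1)]] by simp
  then show "x \<in> dos_Xi M h \<tau> 0 (h j + \<tau> j)" using n unfolding dos_Xi_def by auto
qed

lemma index_le_frequency_bound:
  assumes "frequency_bound M h B"
  shows "\<exists>\<Lambda>. \<forall>n. dos_valid M n \<longrightarrow> real n \<le> \<Lambda> + B * h n"
proof -
  obtain \<Lambda> :: nat where \<Lambda>: "\<forall>s\<ge>0. finite (dos_count_set M h 0 s) \<and>
      real (card (dos_count_set M h 0 s)) \<le> real \<Lambda> + B * s"
    using assms unfolding frequency_bound_def by blast
  have "real n \<le> real \<Lambda> + B * h n" if n: "dos_valid M n" for n
  proof -
    have sub: "h ` {1..n} \<subseteq> dos_count_set M h 0 (h n)"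
      unfolding dos_count_set_def using h_nonneg start_mono[OF n] dos_valid_le[OF n] by force
    have inj: "inj_on h {1..n}"
    proof (rule linorder_inj_onI')
      fix i j assume "i \<in> {1..n}" "j \<in> {1..n}" "i < j"
      then have "h i < h j" by (intro start_less_start dos_valid_le[OF n]) auto
      then show "h i \<noteq> h j" by simp
    qed
    have fin: "finite (dos_count_set M h 0 (h n))"
      and count: "real (card (dos_count_set M h 0 (h n))) \<le> real \<Lambda> + B * h n"
      using \<Lambda> h_nonneg[OF n] by auto
    have "n = card (h ` {1..n})" using card_image[OF inj] by simp
    also have "\<dots> \<le> card (dos_count_set M h 0 (h n))" by (rule card_mono[OF fin sub])
    finally show ?thesis using count by linarith
  qed
  then show ?thesis by blast
qed

lemma last_arrival:
  assumes "frequency_bound M h B" "dos_valid M m" "h m \<le> s"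
  shows "\<exists>j. dos_valid M j \<and> h j \<le> s \<and> (\<forall>n. dos_valid M n \<and> h n \<le> s \<longrightarrow> n \<le> j)"
proof -
  obtain \<Lambda> where \<Lambda>: "\<forall>n. dos_valid M n \<longrightarrow> real n \<le> \<Lambda> + B * h n"
    using index_le_frequency_bound[OF assms(1)] by blast
  obtain K :: nat where K: "\<Lambda> + B * s < real K"
    using reals_Archimedean2 by blast
  have "0 \<le> B" using assms(1) unfolding frequency_bound_def by simp
  have bound: "n \<le> K" if "dos_valid M n" "h n \<le> s" for n
  proof -
    have "real n \<le> \<Lambda> + B * s"
      using \<Lambda> that mult_left_mono[OF that(2) \<open>0 \<le> B\<close>] by force
    then show ?thesis using K by linarith
  qed
  have "\<exists>j. (dos_valid M j \<and> h j \<le> s) \<and> (\<forall>n. dos_valid M n \<and> h n \<le> s \<longrightarrow> n \<le> j)"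
    by (intro Nat.ex_has_greatest_nat[of _ m K]) (use assms(2,3) bound in auto)
  then show ?thesis by blast
qed

lemma period_exists:
  assumes "frequency_bound M h B" "dos_valid M m" "h m + \<tau> m \<le> s"
  shows "\<exists>n\<ge>m. dos_period M h \<tau> n s"
proof -
  let ?P = "\<lambda>n. dos_valid M n \<and> h n + \<tau> n \<le> s"
  have "h m \<le> s" using assms(3) tau_nonneg[OF assms(2)] by simp
  then obtain j where j: "\<forall>n. dos_valid M n \<and> h n \<le> s \<longrightarrow> n \<le> j"
    using last_arrival[OF assms(1,2)] by blast
  have "\<forall>n. ?P n \<longrightarrow> n \<le> j"
  proof (intro allI impI)
    fix n assume "?P n"
    then show "n \<le> j" using j tau_nonneg[of n] by simp
  qed
  then have "\<exists>n. ?P n \<and> (\<forall>n'. ?P n' \<longrightarrow> n' \<le> n)"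
    by (intro Nat.ex_has_greatest_nat[of ?P m j]) (use assms(2,3) in simp)
  then obtain n where n: "?P n" "\<And>n'. ?P n' \<Longrightarrow> n' \<le> n" by blast
  have "s < h (n + 1) + \<tau> (n + 1)" if "dos_valid M (n + 1)"
    using n(2)[of "n + 1"] that by force
  then have "dos_period M h \<tau> n s" using n(1) unfolding dos_period_def by blast
  moreover have "m \<le> n" using n(2) assms(2,3) by blast
  ultimately show ?thesis by blast
qed

lemma duration_bound_of_ratios:
  assumes freq: "frequency_bound M h B"
    and tau: "\<forall>n. dos_valid M n \<longrightarrow> \<tau> n \<le> \<Gamma>"
    and S: "0 \<le> S" "S \<le> 1"
    and ratios: "\<forall>n. dos_valid M n \<and> ell \<le> n \<longrightarrow> est_Bd_i M h \<tau> n \<le> S"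
  shows "duration_bound M h \<tau> S"
proof -
  define C where "C = (\<Sum>i<ell. \<bar>h i\<bar> + \<bar>\<tau> i\<bar>)"
  have "0 \<le> C" unfolding C_def by (auto intro: sum_nonneg)
  have "measure lebesgue (dos_Xi M h \<tau> 0 s) \<le> (C + \<bar>\<Gamma>\<bar> + 1) + S * s" if "0 \<le> s" for s
  proof (cases "\<exists>m. dos_valid M m \<and> h m \<le> s")
    case False
    then show ?thesis using dos_Xi_empty[of s] \<open>0 \<le> C\<close> S \<open>0 \<le> s\<close> by force
  next
    case True
    then obtain j where j: "dos_valid M j" "h j \<le> s" "\<forall>n. dos_valid M n \<and> h n \<le> s \<longrightarrow> n \<le> j"
      using last_arrival[OF freq] by blast
    let ?b = "h j + \<tau> j"
    have "measure lebesgue (dos_Xi M h \<tau> 0 s) \<le> measure lebesgue (dos_Xi M h \<tau> 0 ?b)"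
      using measure_dos_Xi_mono dos_Xi_subset_last_end[OF j(1,3)] by blast
    also have "\<dots> \<le> (C + \<bar>\<Gamma>\<bar> + 1) + S * s"
    proof (cases "ell \<le> j")
      case True
      have "?b \<le> s + \<bar>\<Gamma>\<bar>" using j(1,2) tau by force
      then have "S * ?b \<le> S * s + \<bar>\<Gamma>\<bar>"
        using S mult_left_mono[of ?b "s + \<bar>\<Gamma>\<bar>" S] mult_left_le_one_le[of "\<bar>\<Gamma>\<bar>" S]
        by (simp add: distrib_left)
      moreover have "est_Bd_i M h \<tau> j * ?b \<le> S * ?b"
        using ratios j(1) True end_nonneg[OF j(1)] by (simp add: mult_right_mono)
      ultimately show ?thesis using measure_dos_Xi_end[OF j(1)] \<open>0 \<le> C\<close> by simp
    next
      case False
      have "measure lebesgue (dos_Xi M h \<tau> 0 ?b) \<le> \<bar>h j\<bar> + \<bar>\<tau> j\<bar>"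
        using measure_dos_Xi_le[OF end_nonneg[OF j(1)], of M h \<tau>] by linarith
      also have "\<dots> \<le> C"
        unfolding C_def using False by (intro member_le_sum) auto
      finally show ?thesis using S \<open>0 \<le> s\<close> by (simp add: add_increasing2)
    qed
    finally show ?thesis .
  qed
  moreover have "0 < C + \<bar>\<Gamma>\<bar> + 1" using \<open>0 \<le> C\<close> by simp
  ultimately show ?thesis unfolding duration_bound_def using S by blast
qed

lemma frequency_bound_of_ratios:
  assumes freq: "frequency_bound M h B" and "2 \<le> ell" "0 \<le> S"
    and ratios: "\<forall>n. dos_valid M n \<and> ell \<le> n \<longrightarrow> est_Bf_i h n \<le> S"
  shows "frequency_bound M h S"
proof -
  have count: "finite (dos_count_set M h 0 s) \<and> real (card (dos_count_set M h 0 s)) \<le> real ell + S * s"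
    if "0 \<le> s" for s
  proof (cases "\<exists>m. dos_valid M m \<and> h m \<le> s")
    case False
    then have "dos_count_set M h 0 s = {}" unfolding dos_count_set_def by force
    then show ?thesis using \<open>0 \<le> S\<close> \<open>0 \<le> s\<close> by simp
  next
    case True
    then obtain j where j: "dos_valid M j" "h j \<le> s" "\<forall>n. dos_valid M n \<and> h n \<le> s \<longrightarrow> n \<le> j"
      using last_arrival[OF freq] by blast
    have sub: "dos_count_set M h 0 s \<subseteq> h ` {1..j}"
    proof
      fix x assume "x \<in> dos_count_set M h 0 s"
      then obtain n where "x = h n" "dos_valid M n" "h n \<le> s" unfolding dos_count_set_def by auto
      then show "x \<in> h ` {1..j}" using j(3) dos_valid_ge_1 by auto
    qed
    have fin: "finite (dos_count_set M h 0 s)" using finite_subset[OF sub] by simp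
    have "card (dos_count_set M h 0 s) \<le> card (h ` {1..j})" by (rule card_mono[OF _ sub]) simp
    also have "\<dots> \<le> j" using card_image_le[of "{1..j}" h] by simp
    finally have "card (dos_count_set M h 0 s) \<le> j" .
    moreover have "real j \<le> real ell + S * s"
    proof (cases "ell \<le> j")
      case True
      have "0 < h j" using h_pos[OF j(1)] True \<open>2 \<le> ell\<close> by simp
      then have "real j = est_Bf_i h j * h j" unfolding est_Bf_i_def by simp
      also have "\<dots> \<le> S * s"
        using ratios j(1,2) True \<open>0 < h j\<close> \<open>0 \<le> S\<close> by (intro mult_mono) auto
      finally show ?thesis by simp
    qed (use \<open>0 \<le> S\<close> \<open>0 \<le> s\<close> in \<open>simp add: add_increasing2\<close>)
    ultimately show ?thesis using fin by linarith
  qed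
  have "(0::nat) < ell" using \<open>2 \<le> ell\<close> by simp
  then show ?thesis unfolding frequency_bound_def using count \<open>0 \<le> S\<close> by blast
qed

lemma measure_dos_Xi_gap:
  assumes "dos_valid M 2" "h 2 \<le> b"
  shows "measure lebesgue (dos_Xi M h \<tau> 0 b) \<le> b - (h 2 - (h 1 + \<tau> 1))"
proof -
  have "dos_valid M 1" using dos_valid_le[OF assms(1)] by simp
  then have gap: "0 \<le> h 1 + \<tau> 1" "h 1 + \<tau> 1 < h 2"
    using end_nonneg end_less_start[OF assms(1)] by auto
  have "dos_Xi M h \<tau> 0 b \<subseteq> {0..b} - {h 1 + \<tau> 1<..<h 2}"
  proof
    fix x assume "x \<in> dos_Xi M h \<tau> 0 b"
    then obtain n where n: "dos_valid M n" "x \<in> dos_H h \<tau> n" "0 \<le> x" "x \<le> b"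
      unfolding dos_Xi_def by auto
    have "x \<le> h 1 + \<tau> 1 \<or> h 2 \<le> x"
    proof (cases "n = 1")
      case False
      then have "h 2 \<le> h n" using start_mono[OF n(1)] dos_valid_ge_1[OF n(1)] by simp
      then show ?thesis using dos_H_bounds[OF n(1,2)] by simp
    qed (use dos_H_bounds[OF n(1,2)] in simp)
    then show "x \<in> {0..b} - {h 1 + \<tau> 1<..<h 2}" using n by auto
  qed
  then have "measure lebesgue (dos_Xi M h \<tau> 0 b) \<le> measure lebesgue ({0..b} - {h 1 + \<tau> 1<..<h 2})"
    by (intro measure_mono_fmeasurable dos_Xi_lmeasurable[THEN fmeasurableD] fmeasurable_Diff) auto
  also have "\<dots> = b - (h 2 - (h 1 + \<tau> 1))"
    using gap assms(2) by (subst measure_Diff) (auto simp: fmeasurable_def)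
  finally show ?thesis .
qed

lemma est_Bd_i_uniformly_less_one:
  assumes "duration_bound M h \<tau> B" "B < 1"
  shows "\<exists>U<1. \<forall>n. dos_valid M n \<and> 2 \<le> n \<longrightarrow> est_Bd_i M h \<tau> n \<le> U"
proof (cases "dos_valid M 2")
  case False
  then show ?thesis using dos_valid_le[of M _ 2] by (intro exI[of _ 0]) auto
next
  case True
  obtain \<kappa> where "0 < \<kappa>" and \<kappa>: "\<forall>s\<ge>0. measure lebesgue (dos_Xi M h \<tau> 0 s) \<le> \<kappa> + B * s"
    using assms(1) unfolding duration_bound_def by blast
  define g where "g = h 2 - (h 1 + \<tau> 1)"
  have "0 < g" unfolding g_def using end_less_start[OF True] by simp
  \<comment> \<open>Average the gap bound m \<le> x - g and the duration bound m \<le> \<kappa> + B x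
      with weights \<kappa> and g, so that the constant terms cancel.\<close>
  define U where "U = (\<kappa> + g * B) / (\<kappa> + g)"
  have "est_Bd_i M h \<tau> n \<le> U" if n: "dos_valid M n" "2 \<le> n" for n
  proof -
    define x where "x = h n + \<tau> n"
    define m where "m = measure lebesgue (dos_Xi M h \<tau> 0 x)"
    have "h 2 \<le> x" unfolding x_def using start_mono[OF n(1), of 2] n(2) tau_nonneg[OF n(1)] by simp
    then have "0 < x" using h_pos[OF True] by simp
    have "m \<le> x - g" unfolding m_def g_def using measure_dos_Xi_gap[OF True \<open>h 2 \<le> x\<close>] .
    moreover have "m \<le> \<kappa> + B * x" unfolding m_def using \<kappa> \<open>0 < x\<close> by simp
    ultimately have "m * (\<kappa> + g) \<le> (\<kappa> + g * B) * x"
      using \<open>0 < \<kappa>\<close> \<open>0 < g\<close> mult_left_mono[of m "x - g" \<kappa>] mult_left_mono[of m "\<kappa> + B * x" g]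
      by (simp add: algebra_simps)
    then have "m / x \<le> U"
      unfolding U_def using \<open>0 < x\<close> \<open>0 < \<kappa>\<close> \<open>0 < g\<close> by (simp add: field_simps)
    then show ?thesis unfolding est_Bd_i_def m_def x_def .
  qed
  moreover have "U < 1" unfolding U_def using \<open>0 < \<kappa>\<close> \<open>0 < g\<close> \<open>B < 1\<close> by simp
  ultimately show ?thesis by blast
qed

lemma est_Bf_i_bounded:
  assumes "frequency_bound M h B"
  shows "\<exists>U. \<forall>n. dos_valid M n \<and> 2 \<le> n \<longrightarrow> est_Bf_i h n \<le> U"
proof (cases "dos_valid M 2")
  case False
  then show ?thesis using dos_valid_le[of M _ 2] by auto
next
  case True
  obtain \<Lambda> where \<Lambda>: "\<forall>n. dos_valid M n \<longrightarrow> real n \<le> \<Lambda> + B * h n"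
    using index_le_frequency_bound[OF assms] by blast
  have "est_Bf_i h n \<le> \<bar>\<Lambda>\<bar> / h 2 + B" if n: "dos_valid M n" "2 \<le> n" for n
  proof -
    have "0 < h 2" "h 2 \<le> h n" using h_pos[OF True] start_mono[OF n(1)] n(2) by auto
    have "est_Bf_i h n \<le> (\<Lambda> + B * h n) / h n"
      unfolding est_Bf_i_def using \<Lambda> n(1) \<open>0 < h 2\<close> \<open>h 2 \<le> h n\<close> by (simp add: divide_right_mono)
    also have "\<dots> = \<Lambda> / h n + B" using \<open>0 < h 2\<close> \<open>h 2 \<le> h n\<close> by (simp add: field_simps)
    also have "\<Lambda> / h n \<le> \<bar>\<Lambda>\<bar> / h 2"
      using \<open>0 < h 2\<close> \<open>h 2 \<le> h n\<close> by (simp add: frac_le)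
    finally show ?thesis by simp
  qed
  then show ?thesis by blast
qed

end

locale adaptive_sampling = dos_seq M h \<tau>
  for M :: enat and h \<tau> :: "nat \<Rightarrow> real" +
  fixes ell :: nat and \<epsilon>0 \<theta> \<gamma>1 \<Delta>0 :: real and t \<Delta> :: "nat \<Rightarrow> real"
  assumes not_edge: "\<not> dos_edge_case M h \<tau>"
    and ell: "2 \<le> ell"
    and eps: "0 < \<epsilon>0" "\<epsilon>0 < 1"
    and theta: "0 < \<theta>" "\<theta> < 1"
    and gamma: "1 < \<gamma>1"
    and step_max: "0 < \<Delta>0"
    and step_init: "\<forall>k\<ge>1. dos_before_end M h \<tau> 1 (t k) \<longrightarrow> \<Delta> k = \<Delta>0"
    and step_per: "\<forall>k\<ge>1. \<forall>n\<ge>1. dos_period M h \<tau> n (t k) \<longrightarrow>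
        \<Delta> k = min \<Delta>0 ((1 - est_Bd ell \<epsilon>0 \<theta> M h \<tau> (h n + \<tau> n))
                          / (\<gamma>1 * est_Bf ell \<epsilon>0 \<theta> M h (h n)))"
begin

definition step_size :: "nat \<Rightarrow> real" where
  "step_size n = min \<Delta>0 ((1 - est_Bd ell \<epsilon>0 \<theta> M h \<tau> (h n + \<tau> n))
                          / (\<gamma>1 * est_Bf ell \<epsilon>0 \<theta> M h (h n)))"

definition Bd_sup :: real where
  "Bd_sup = (SUP i\<in>{i. dos_valid M i \<and> ell \<le> i}. est_Bd_i M h \<tau> i)"

definition Bf_sup :: real where
  "Bf_sup = (SUP i\<in>{i. dos_valid M i \<and> ell \<le> i}. est_Bf_i h i)"

lemma frequency_bounded: obtains B where "frequency_bound M h B"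
  using not_dos_edge_case_bounds(2)[OF not_edge] by blast

lemma step_after_end:
  assumes "1 \<le> k" "dos_valid M m" "h m + \<tau> m \<le> t k"
  shows "\<exists>n\<ge>m. dos_valid M n \<and> \<Delta> k = step_size n"
proof -
  obtain B where "frequency_bound M h B" by (rule frequency_bounded)
  then obtain n where "m \<le> n" "dos_period M h \<tau> n (t k)"
    using period_exists assms(2,3) by blast
  moreover from this have "dos_valid M n" unfolding dos_period_def by blast
  ultimately show ?thesis
    using step_per assms(1) dos_valid_ge_1 unfolding step_size_def by blast
qed

lemma step_cases:
  assumes "1 \<le> k" "0 \<le> t k"
  shows "\<Delta> k = \<Delta>0 \<or> (\<exists>n. dos_valid M n \<and> \<Delta> k = step_size n)"
proof (cases "dos_before_end M h \<tau> 1 (t k)")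
  case True
  then show ?thesis using step_init assms(1) by blast
next
  case False
  then have "dos_valid M 1" "h 1 + \<tau> 1 \<le> t k"
    using assms(2) unfolding dos_before_end_def by auto
  then show ?thesis using step_after_end[OF assms(1)] by blast
qed

lemma step_le_max:
  assumes "1 \<le> k" "0 \<le> t k" shows "\<Delta> k \<le> \<Delta>0"
  using step_cases[OF assms] unfolding step_size_def by auto

lemma steps_bounded_below: "\<exists>D>0. \<forall>k\<ge>1. 0 \<le> t k \<longrightarrow> D \<le> \<Delta> k"
proof -
  obtain U where "U < 1" and U: "\<forall>i. dos_valid M i \<and> 2 \<le> i \<longrightarrow> est_Bd_i M h \<tau> i \<le> U"
    using not_dos_edge_case_bounds(1)[OF not_edge] est_Bd_i_uniformly_less_one by blast
  obtain B where "frequency_bound M h B" by (rule frequency_bounded)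
  then obtain V where V: "\<forall>i. dos_valid M i \<and> 2 \<le> i \<longrightarrow> est_Bf_i h i \<le> V"
    using est_Bf_i_bounded by blast
  define Bd_max where "Bd_max = max \<epsilon>0 (\<theta> * U + (1 - \<theta>))"
  define Bf_max where "Bf_max = max \<epsilon>0 (V / \<theta>)"
  define D where "D = min \<Delta>0 ((1 - Bd_max) / (\<gamma>1 * Bf_max))"
  have "\<theta> * U < \<theta>" using \<open>U < 1\<close> theta by simp
  then have "Bd_max < 1" unfolding Bd_max_def using eps by simp
  have "D \<le> step_size n" if n: "dos_valid M n" for n
  proof -
    have range: "dos_valid M i \<and> 2 \<le> i" if "i \<in> {ell..n}" for i
      using that dos_valid_le[OF n] ell by auto
    have "est_Bd ell \<epsilon>0 \<theta> M h \<tau> (h n + \<tau> n) \<le> Bd_max"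
      unfolding Bd_max_def using n ell theta range U by (intro est_Bd_at_end_le) auto
    moreover have "est_Bf ell \<epsilon>0 \<theta> M h (h n) \<le> Bf_max"
      unfolding Bf_max_def using n ell theta range V by (intro est_Bf_at_start_le) auto
    moreover have "0 < \<gamma>1 * est_Bf ell \<epsilon>0 \<theta> M h (h n)"
      using eps_le_est_Bf[of \<epsilon>0] eps gamma by (simp add: less_le_trans)
    ultimately have "(1 - Bd_max) / (\<gamma>1 * Bf_max)
        \<le> (1 - est_Bd ell \<epsilon>0 \<theta> M h \<tau> (h n + \<tau> n)) / (\<gamma>1 * est_Bf ell \<epsilon>0 \<theta> M h (h n))"
      using \<open>Bd_max < 1\<close> gamma by (intro frac_le) auto
    then show ?thesis unfolding D_def step_size_def by linarith
  qed
  moreover have "0 < D"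
    unfolding D_def Bf_max_def using \<open>Bd_max < 1\<close> step_max eps gamma by auto
  moreover have "D \<le> \<Delta>0" unfolding D_def by simp
  ultimately show ?thesis using step_cases by metis
qed

lemma Bd_sup_props:
  assumes "dos_valid M ell"
  shows "0 \<le> Bd_sup" "Bd_sup < 1" "duration_bound M h \<tau> Bd_sup"
    and "0 < \<eta> \<Longrightarrow> \<exists>i. dos_valid M i \<and> ell \<le> i \<and> Bd_sup - \<eta> < est_Bd_i M h \<tau> i"
proof -
  let ?I = "{i. dos_valid M i \<and> ell \<le> i}"
  have "ell \<in> ?I" using assms by simp
  then have "?I \<noteq> {}" by blast
  obtain U where "U < 1" and U: "\<forall>i. dos_valid M i \<and> 2 \<le> i \<longrightarrow> est_Bd_i M h \<tau> i \<le> U"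
    using not_dos_edge_case_bounds(1)[OF not_edge] est_Bd_i_uniformly_less_one by blast
  then have U_I: "\<And>i. i \<in> ?I \<Longrightarrow> est_Bd_i M h \<tau> i \<le> U" using ell by auto
  then have bdd: "bdd_above (est_Bd_i M h \<tau> ` ?I)" by (rule bdd_aboveI2)
  have upper: "\<And>i. i \<in> ?I \<Longrightarrow> est_Bd_i M h \<tau> i \<le> Bd_sup"
    unfolding Bd_sup_def by (rule cSUP_upper[OF _ bdd])
  show "0 \<le> Bd_sup" using upper[OF \<open>ell \<in> ?I\<close>] est_Bd_i_nonneg[OF assms] by linarith
  have "Bd_sup \<le> U" unfolding Bd_sup_def by (rule cSUP_least[OF \<open>?I \<noteq> {}\<close> U_I])
  then show "Bd_sup < 1" using \<open>U < 1\<close> by simp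
  obtain B where "frequency_bound M h B" by (rule frequency_bounded)
  moreover obtain \<Gamma> where "\<forall>n. dos_valid M n \<longrightarrow> \<tau> n \<le> \<Gamma>"
    using not_dos_edge_case_bounds(3)[OF not_edge] by blast
  ultimately show "duration_bound M h \<tau> Bd_sup"
    by (rule duration_bound_of_ratios) (use \<open>0 \<le> Bd_sup\<close> \<open>Bd_sup < 1\<close> upper in auto)
  show "\<exists>i. dos_valid M i \<and> ell \<le> i \<and> Bd_sup - \<eta> < est_Bd_i M h \<tau> i" if "0 < \<eta>"
  proof -
    have "Bd_sup - \<eta> < Bd_sup" using that by simp
    then have "\<exists>i\<in>?I. Bd_sup - \<eta> < est_Bd_i M h \<tau> i"
      unfolding Bd_sup_def by (subst (asm) less_cSUP_iff[OF \<open>?I \<noteq> {}\<close> bdd])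
    then show ?thesis by blast
  qed
qed

lemma Bf_sup_props:
  assumes "dos_valid M ell"
  shows "0 < Bf_sup" "frequency_bound M h Bf_sup"
    and "0 < \<eta> \<Longrightarrow> \<exists>i. dos_valid M i \<and> ell \<le> i \<and> Bf_sup - \<eta> < est_Bf_i h i"
proof -
  let ?I = "{i. dos_valid M i \<and> ell \<le> i}"
  have "ell \<in> ?I" using assms by simp
  then have "?I \<noteq> {}" by blast
  obtain B where freq: "frequency_bound M h B" by (rule frequency_bounded)
  then obtain V where V: "\<forall>i. dos_valid M i \<and> 2 \<le> i \<longrightarrow> est_Bf_i h i \<le> V"
    using est_Bf_i_bounded by blast
  then have "\<And>i. i \<in> ?I \<Longrightarrow> est_Bf_i h i \<le> V" using ell by auto
  then have bdd: "bdd_above (est_Bf_i h ` ?I)" by (rule bdd_aboveI2)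
  have upper: "\<And>i. i \<in> ?I \<Longrightarrow> est_Bf_i h i \<le> Bf_sup"
    unfolding Bf_sup_def by (rule cSUP_upper[OF _ bdd])
  have "0 < est_Bf_i h ell" unfolding est_Bf_i_def using h_pos[OF assms ell] ell by simp
  then show "0 < Bf_sup" using upper[OF \<open>ell \<in> ?I\<close>] by linarith
  then show "frequency_bound M h Bf_sup"
    by (intro frequency_bound_of_ratios[OF freq ell]) (use upper in auto)
  show "\<exists>i. dos_valid M i \<and> ell \<le> i \<and> Bf_sup - \<eta> < est_Bf_i h i" if "0 < \<eta>"
  proof -
    have "Bf_sup - \<eta> < Bf_sup" using that by simp
    then have "\<exists>i\<in>?I. Bf_sup - \<eta> < est_Bf_i h i"
      unfolding Bf_sup_def by (subst (asm) less_cSUP_iff[OF \<open>?I \<noteq> {}\<close> bdd])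
    then show ?thesis by blast
  qed
qed

lemma step_size_le_ratios:
  assumes "dos_valid M n" "i \<in> {ell..n}" "j \<in> {ell..n}"
  shows "step_size n \<le> \<theta> * (1 - est_Bd_i M h \<tau> i) / (\<gamma>1 * (est_Bf_i h j / \<theta>))"
proof -
  have valid: "dos_valid M i" "dos_valid M j" using assms dos_valid_le ell by auto
  have "0 < est_Bf_i h j" unfolding est_Bf_i_def using h_pos[OF valid(2)] assms(3) ell by simp
  have "1 - est_Bd ell \<epsilon>0 \<theta> M h \<tau> (h n + \<tau> n) \<le> \<theta> * (1 - est_Bd_i M h \<tau> i)"
    using est_Bd_at_end_ge[OF assms(1) _ assms(2), of \<theta> \<epsilon>0] ell by (simp add: algebra_simps)
  moreover have "\<gamma>1 * (est_Bf_i h j / \<theta>) \<le> \<gamma>1 * est_Bf ell \<epsilon>0 \<theta> M h (h n)"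
    using est_Bf_at_start_ge[OF assms(1) _ assms(3), of \<theta> \<epsilon>0] ell gamma by (intro mult_left_mono) auto
  moreover have "0 \<le> \<theta> * (1 - est_Bd_i M h \<tau> i)"
    using est_Bd_i_le_one[OF valid(1)] theta by simp
  ultimately have "(1 - est_Bd ell \<epsilon>0 \<theta> M h \<tau> (h n + \<tau> n)) / (\<gamma>1 * est_Bf ell \<epsilon>0 \<theta> M h (h n))
      \<le> \<theta> * (1 - est_Bd_i M h \<tau> i) / (\<gamma>1 * (est_Bf_i h j / \<theta>))"
    using \<open>0 < est_Bf_i h j\<close> theta gamma by (intro frac_le) auto
  then show ?thesis unfolding step_size_def by linarith
qed

lemma steps_eventually_below_sup_ratios:
  assumes "dos_valid M ell" "0 < \<eta>" "\<eta> < Bf_sup"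
  shows "\<exists>tc\<ge>0. \<forall>k\<ge>1. tc \<le> t k \<longrightarrow>
           \<Delta> k \<le> \<theta> * \<theta> / \<gamma>1 * (1 - Bd_sup + \<eta>) / (Bf_sup - \<eta>)"
proof -
  obtain i where i: "dos_valid M i" "ell \<le> i" "Bd_sup - \<eta> < est_Bd_i M h \<tau> i"
    using Bd_sup_props(4)[OF assms(1,2)] by blast
  obtain j where j: "dos_valid M j" "ell \<le> j" "Bf_sup - \<eta> < est_Bf_i h j"
    using Bf_sup_props(3)[OF assms(1,2)] by blast
  define m where "m = max i j"
  have "dos_valid M m" unfolding m_def using i j by (simp add: max_def)
  have "\<Delta> k \<le> \<theta> * \<theta> / \<gamma>1 * (1 - Bd_sup + \<eta>) / (Bf_sup - \<eta>)"
    if k: "1 \<le> k" "h m + \<tau> m \<le> t k" for k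
  proof -
    obtain n where n: "m \<le> n" "dos_valid M n" "\<Delta> k = step_size n"
      using step_after_end[OF k(1) \<open>dos_valid M m\<close> k(2)] by blast
    have range: "i \<in> {ell..n}" "j \<in> {ell..n}" using i(2) j(2) n(1) unfolding m_def by auto
    have "\<Delta> k \<le> \<theta> * (1 - est_Bd_i M h \<tau> i) / (\<gamma>1 * (est_Bf_i h j / \<theta>))"
      unfolding n(3) by (rule step_size_le_ratios[OF n(2) range])
    also have "\<dots> \<le> \<theta> * (1 - Bd_sup + \<eta>) / (\<gamma>1 * ((Bf_sup - \<eta>) / \<theta>))"
    proof (rule frac_le)
      show "0 \<le> \<theta> * (1 - Bd_sup + \<eta>)"
        using theta Bd_sup_props(2)[OF assms(1)] assms(2) by simp
      show "\<theta> * (1 - est_Bd_i M h \<tau> i) \<le> \<theta> * (1 - Bd_sup + \<eta>)"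
        using theta i(3) by simp
      show "0 < \<gamma>1 * ((Bf_sup - \<eta>) / \<theta>)"
        using theta gamma assms(3) by simp
      show "\<gamma>1 * ((Bf_sup - \<eta>) / \<theta>) \<le> \<gamma>1 * (est_Bf_i h j / \<theta>)"
        using theta gamma j(3) by (simp add: divide_right_mono)
    qed
    also have "\<dots> = \<theta> * \<theta> / \<gamma>1 * (1 - Bd_sup + \<eta>) / (Bf_sup - \<eta>)"
      using theta gamma assms(3) by (simp add: field_simps)
    finally show ?thesis .
  qed
  moreover have "0 \<le> h m + \<tau> m" using end_nonneg[OF \<open>dos_valid M m\<close>] .
  ultimately show ?thesis by blast
qed

lemma zero_bounds_of_short_sequence:
  assumes "\<not> dos_valid M ell"
  shows "duration_bound M h \<tau> 0 \<and> frequency_bound M h 0"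
proof -
  have short: "\<not> (dos_valid M n \<and> ell \<le> n)" for n
    using assms dos_valid_le ell by fastforce
  obtain B where freq: "frequency_bound M h B" by (rule frequency_bounded)
  obtain \<Gamma> where "\<forall>n. dos_valid M n \<longrightarrow> \<tau> n \<le> \<Gamma>"
    using not_dos_edge_case_bounds(3)[OF not_edge] by blast
  then have "duration_bound M h \<tau> 0"
    by (rule duration_bound_of_ratios[OF freq]) (use short in auto)
  moreover have "frequency_bound M h 0"
    by (rule frequency_bound_of_ratios[OF freq ell]) (use short in auto)
  ultimately show ?thesis ..
qed

lemma steps_eventually_bounded:
  "\<exists>tc\<ge>0. \<exists>Db Bd Bf. 0 < Db \<and> Db \<le> \<Delta>0 \<and> duration_bound M h \<tau> Bd \<and> frequency_bound M h Bf \<and>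
     Bd + Bf * Db < 1 \<and> (\<forall>k\<ge>1. tc \<le> t k \<longrightarrow> \<Delta> k \<le> Db)"
proof (cases "dos_valid M ell")
  case False
  then have "0 < \<Delta>0 \<and> \<Delta>0 \<le> \<Delta>0 \<and> duration_bound M h \<tau> 0 \<and> frequency_bound M h 0 \<and>
      0 + 0 * \<Delta>0 < 1 \<and> (\<forall>k\<ge>1. 0 \<le> t k \<longrightarrow> \<Delta> k \<le> \<Delta>0)"
    using zero_bounds_of_short_sequence step_max step_le_max by auto
  then show ?thesis by blast
next
  case True
  define a where "a = 1 - Bd_sup"
  have "0 < a" "0 < Bf_sup" using Bd_sup_props(2)[OF True] Bf_sup_props(1)[OF True] unfolding a_def by auto
  have "\<theta> * \<theta> < 1" using mult_strict_mono[OF theta(2) theta(2)] theta by simp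
  then have "\<theta> * \<theta> / \<gamma>1 < 1" using gamma by simp
  then obtain \<eta> where "0 < \<eta>" "\<eta> < Bf_sup"
    and margin: "Bf_sup * (\<theta> * \<theta> / \<gamma>1 * (a + \<eta>) / (Bf_sup - \<eta>)) < a"
    using margin_exists[OF \<open>0 < a\<close> \<open>0 < Bf_sup\<close>, of "\<theta> * \<theta> / \<gamma>1"] theta gamma by auto
  define R where "R = \<theta> * \<theta> / \<gamma>1 * (a + \<eta>) / (Bf_sup - \<eta>)"
  obtain tc where "0 \<le> tc" and tc: "\<forall>k\<ge>1. tc \<le> t k \<longrightarrow> \<Delta> k \<le> R"
    using steps_eventually_below_sup_ratios[OF True \<open>0 < \<eta>\<close> \<open>\<eta> < Bf_sup\<close>]
    unfolding R_def a_def by (auto simp: algebra_simps)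
  define Db where "Db = min \<Delta>0 R"
  have "0 < R" unfolding R_def using \<open>0 < a\<close> \<open>0 < \<eta>\<close> \<open>\<eta> < Bf_sup\<close> theta gamma by simp
  then have "0 < Db" "Db \<le> \<Delta>0" unfolding Db_def using step_max by auto
  have "Bf_sup * Db \<le> Bf_sup * R" unfolding Db_def using \<open>0 < Bf_sup\<close> by simp
  then have "Bd_sup + Bf_sup * Db < 1" using margin unfolding R_def a_def by simp
  moreover have "\<forall>k\<ge>1. tc \<le> t k \<longrightarrow> \<Delta> k \<le> Db"
    using tc step_le_max \<open>0 \<le> tc\<close> unfolding Db_def by force
  ultimately show ?thesis
    using \<open>0 \<le> tc\<close> \<open>0 < Db\<close> \<open>Db \<le> \<Delta>0\<close> Bd_sup_props(3)[OF True] Bf_sup_props(2)[OF True] by blast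
qed

end

theorem lemma4:
  fixes M :: enat and h \<tau> :: "nat \<Rightarrow> real" and L :: "real^'n^'n"
    and ell :: nat and \<epsilon>0 \<theta> \<gamma>1 \<Delta>0 :: real and t \<Delta> :: "nat \<Rightarrow> real"
  assumes dos: "dos_sequence M h \<tau>"
    and not_edge: "\<not> dos_edge_case M h \<tau>"
    and lap: "graph_laplacian L" "symmetric_matrix L" "irreducible_matrix L"
    and est: "2 \<le> ell" "0 < \<epsilon>0" "\<epsilon>0 < 1" "0 < \<theta>" "\<theta> < 1"
    and gam: "1 < \<gamma>1"
    and D0: "0 < \<Delta>0" "\<bar>1 - \<Delta>0 * lambda_max L\<bar> < 1"
    and t1: "t 1 = 0"
    and trec: "\<forall>k\<ge>1. t (k + 1) = t k + \<Delta> k"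
    and step_init: "\<forall>k\<ge>1. dos_before_end M h \<tau> 1 (t k) \<longrightarrow> \<Delta> k = \<Delta>0"
    and step_per: "\<forall>k\<ge>1. \<forall>n\<ge>1. dos_period M h \<tau> n (t k) \<longrightarrow>
        \<Delta> k = min \<Delta>0 ((1 - est_Bd ell \<epsilon>0 \<theta> M h \<tau> (h n + \<tau> n))
                          / (\<gamma>1 * est_Bf ell \<epsilon>0 \<theta> M h (h n)))"
  shows "\<exists>tc Dl Db Bd Bf. 0 \<le> tc \<and> 0 < Dl \<and>
           duration_bound M h \<tau> Bd \<and> frequency_bound M h Bf \<and>
           (\<forall>k\<ge>1. 0 \<le> t k \<longrightarrow> Dl \<le> \<Delta> k) \<and>
           (\<forall>k\<ge>1. tc \<le> t k \<longrightarrow> \<Delta> k \<le> Db) \<and>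
           \<bar>1 - Db * lambda_max L\<bar> < 1 \<and> Bd + Bf * Db < 1"
proof -
  interpret adaptive_sampling M h \<tau> ell \<epsilon>0 \<theta> \<gamma>1 \<Delta>0 t \<Delta>
    using dos not_edge est gam D0(1) step_init step_per by unfold_locales auto
  obtain Dl where "0 < Dl" "\<forall>k\<ge>1. 0 \<le> t k \<longrightarrow> Dl \<le> \<Delta> k"
    using steps_bounded_below by blast
  moreover obtain tc Db Bd Bf where "0 \<le> tc" "0 < Db" "Db \<le> \<Delta>0"
    "duration_bound M h \<tau> Bd" "frequency_bound M h Bf" "Bd + Bf * Db < 1"
    "\<forall>k\<ge>1. tc \<le> t k \<longrightarrow> \<Delta> k \<le> Db"
    using steps_eventually_bounded by blast
  moreover have "\<bar>1 - Db * lambda_max L\<bar> < 1"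
    using step_within_stability_margin[OF \<open>0 < Db\<close> \<open>Db \<le> \<Delta>0\<close> D0(2)] .
  ultimately show ?thesis by blast
qed

end
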